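(* Let $C_2\subseteq C_1\subseteq\mathbb{F}_2^n$ be linear codes with bases $\beta_2\subseteq\beta_1$, respectively, $Q=Q(C_1,C_2)$ the corresponding CSS code, $\beta_1\setminus\beta_2=\{w_1,\ldots,w_K\}$ (used as encoding), and $N=2^\ell$ ($\ell$ a positive integer). Then: (1) $(1,\ldots,1)\in T_N$ if and only if $wt\left(u+\sum_{i=1}^K v_iw_i\right)\equiv\sum_{i=1}^K v_i\, wt(w_i)\pmod N$ for all $u\in C_2$ and $v\in\mathbb{F}_2^K$; (2) $(1,\ldots,1)\in T_N$ and the logical action of $U(1,\ldots,1)$ is $U(1)^{\otimes K}$ if and only if $wt\left(u+\sum_{i=1}^K v_iw_i\right)\equiv\sum_{i=1}^K v_i\pmod N$ for all $u\in C_2$ and $v\in\mathbb{F}_2^K$; (3) $(1,\ldots,1)\in Id_N$ if and only if $C_1$ is an $N$-divisible code.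
   Context: $wt$ denotes Hamming weight; sums $u+\sum v_iw_i$ are in $\mathbb{F}_2^n$ while $\sum_i v_i wt(w_i)$ and $\sum_iv_i$ are integers. A code is $N$-divisible if $N$ divides the weight of every codeword. $\omega=e^{2\pi\mathbf{i}/N}$, $U(a)=\mathrm{diag}(1,\omega^a)$, $U(b)=\bigotimes_iU(b_i)$ for $b\in\mathbb{Z}_N^n$. $Q(C_1,C_2)$ is the subspace of $(\mathbb{C}^2)^{\otimes n}$ stabilized by all $X(u)Z(v)$, $u\in C_2$, $v\in C_1^\perp$. Logical states are $|v\rangle_L=|C_2|^{-1/2}\sum_{u\in C_2}|u+\sum_iv_iw_i\rangle$, $v\in\mathbb{F}_2^K$; the logical action of $U$ with $UQ=Q$ is $\mathcal{E}^{-1}U\mathcal{E}$ on $(\mathbb{C}^2)^{\otimes K}$, $\mathcal{E}:|v\rangle\mapsto|v\rangle_L$. $H_N=\{b\in\mathbb{Z}_N^n:U(b)Q=Q\}$; $T_N=\{b\in H_N:$ the logical action of $U(b)$ equals $\bigotimes_{i=1}^KE_i$ for some unitaries $E_i\in\mathbb{C}^{2\times2}\}$; $Id_N=\{b\in H_N:U(b)x=x\ \forall x\in Q\}$. *)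

theory Defs
  imports "HOL-Analysis.Analysis" "HOL-Library.Z2"
begin

definition wt :: "bit ^ 'n \<Rightarrow> nat" where
  "wt x = card {i. x $ i = 1}"

definition bdot :: "bit ^ 'n \<Rightarrow> bit ^ 'n \<Rightarrow> bit" where
  "bdot x y = (\<Sum>i\<in>UNIV. x $ i * y $ i)"

definition dual_code :: "(bit ^ 'n) set \<Rightarrow> (bit ^ 'n) set" where
  "dual_code C = {v. \<forall>u\<in>C. bdot u v = 0}"

definition is_basis_of :: "(bit ^ 'n) set \<Rightarrow> (bit ^ 'n) set \<Rightarrow> bool" where
  "is_basis_of \<beta> C \<longleftrightarrow> vec.subspace C \<and> \<beta> \<subseteq> C \<and> vec.independent \<beta> \<and> vec.span \<beta> = C"

definition divisible_code :: "nat \<Rightarrow> (bit ^ 'n) set \<Rightarrow> bool" where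
  "divisible_code N C \<longleftrightarrow> (\<forall>c\<in>C. N dvd wt c)"

text \<open>F_2^K for K a natural number: functions nat => bit vanishing from index K on.\<close>
definition bvecs :: "nat \<Rightarrow> (nat \<Rightarrow> bit) set" where
  "bvecs K = {v. \<forall>i\<ge>K. v i = 0}"

section \<open>States: (C^2)^{\<otimes>n} as functions (bit^'n) => complex (coefficients in the computational basis)\<close>

type_synonym 'n state = "bit ^ 'n \<Rightarrow> complex"

definition ket :: "bit ^ 'n \<Rightarrow> 'n state" where
  "ket x = (\<lambda>y. if y = x then 1 else 0)"

definition sgn_bit :: "bit \<Rightarrow> complex" where
  "sgn_bit s = (if s = 0 then 1 else -1)"

text \<open>X(u)Z(v), where Z(v)|x> = (-1)^(v.x)|x> and X(u)|x> = |x+u>.\<close>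
definition XZ :: "bit ^ 'n \<Rightarrow> bit ^ 'n \<Rightarrow> 'n state \<Rightarrow> 'n state" where
  "XZ u v f = (\<lambda>y. sgn_bit (bdot v (y + u)) * f (y + u))"

definition CSS :: "(bit ^ 'n) set \<Rightarrow> (bit ^ 'n) set \<Rightarrow> 'n state set" where
  "CSS C1 C2 = {f. \<forall>u\<in>C2. \<forall>v\<in>dual_code C1. XZ u v f = f}"

definition omega :: "nat \<Rightarrow> complex" where
  "omega N = exp (2 * pi * \<i> / of_nat N)"

text \<open>U(b) = tensor product of diag(1, omega^(b_i)), for b in Z_N^n (entries in {0..<N}).\<close>
definition Ugate :: "nat \<Rightarrow> nat ^ 'n \<Rightarrow> 'n state \<Rightarrow> 'n state" where
  "Ugate N b f = (\<lambda>x. (\<Prod>i\<in>UNIV. if x $ i = 1 then omega N ^ (b $ i) else 1) * f x)"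

text \<open>Logical space (C^2)^{\<otimes>K}: functions on F_2^K (zero outside).\<close>
definition LS :: "nat \<Rightarrow> ((nat \<Rightarrow> bit) \<Rightarrow> complex) set" where
  "LS K = {g. \<forall>v. v \<notin> bvecs K \<longrightarrow> g v = 0}"

definition encword :: "(nat \<Rightarrow> bit ^ 'n) \<Rightarrow> nat \<Rightarrow> (nat \<Rightarrow> bit) \<Rightarrow> bit ^ 'n" where
  "encword w K v = (\<Sum>i<K. v i *s w i)"

definition logket :: "(bit ^ 'n) set \<Rightarrow> (nat \<Rightarrow> bit ^ 'n) \<Rightarrow> nat \<Rightarrow> (nat \<Rightarrow> bit) \<Rightarrow> 'n state" where
  "logket C2 w K v = (\<lambda>y. (1 / complex_of_real (sqrt (real (card C2)))) *
       (\<Sum>u\<in>C2. ket (u + encword w K v) y))"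

text \<open>The encoding map E : |v> |-> |v>_L, extended linearly.\<close>
definition enc :: "(bit ^ 'n) set \<Rightarrow> (nat \<Rightarrow> bit ^ 'n) \<Rightarrow> nat \<Rightarrow> ((nat \<Rightarrow> bit) \<Rightarrow> complex) \<Rightarrow> 'n state" where
  "enc C2 w K g = (\<lambda>y. \<Sum>v\<in>bvecs K. g v * logket C2 w K v y)"

definition logical_action :: "(bit ^ 'n) set \<Rightarrow> (nat \<Rightarrow> bit ^ 'n) \<Rightarrow> nat \<Rightarrow> ('n state \<Rightarrow> 'n state)
    \<Rightarrow> ((nat \<Rightarrow> bit) \<Rightarrow> complex) \<Rightarrow> ((nat \<Rightarrow> bit) \<Rightarrow> complex)" where
  "logical_action C2 w K U g = the_inv_into (LS K) (enc C2 w K) (U (enc C2 w K g))"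

text \<open>2x2 matrices as functions row => column => entry.\<close>
definition unitary2 :: "(bit \<Rightarrow> bit \<Rightarrow> complex) \<Rightarrow> bool" where
  "unitary2 A \<longleftrightarrow> (\<forall>a b. (\<Sum>k\<in>{0,1}. cnj (A k a) * A k b) = (if a = b then 1 else 0))"

text \<open>Tensor product E_1 \<otimes> ... \<otimes> E_K acting on the logical space.\<close>
definition tensor_op :: "nat \<Rightarrow> (nat \<Rightarrow> bit \<Rightarrow> bit \<Rightarrow> complex)
    \<Rightarrow> ((nat \<Rightarrow> bit) \<Rightarrow> complex) \<Rightarrow> ((nat \<Rightarrow> bit) \<Rightarrow> complex)" where
  "tensor_op K E g = (\<lambda>v'. if v' \<in> bvecs K
      then (\<Sum>v\<in>bvecs K. (\<Prod>i<K. E i (v' i) (v i)) * g v) else 0)"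

definition U1 :: "nat \<Rightarrow> nat \<Rightarrow> bit \<Rightarrow> bit \<Rightarrow> complex" where
  "U1 N a r c = (if r = c then (if r = 1 then omega N ^ a else 1) else 0)"

definition H_N :: "nat \<Rightarrow> (bit ^ 'n) set \<Rightarrow> (bit ^ 'n) set \<Rightarrow> (nat ^ 'n) set" where
  "H_N N C1 C2 = {b. (\<forall>i. b $ i < N) \<and> Ugate N b ` CSS C1 C2 = CSS C1 C2}"

definition T_N :: "nat \<Rightarrow> (bit ^ 'n) set \<Rightarrow> (bit ^ 'n) set \<Rightarrow> (nat \<Rightarrow> bit ^ 'n) \<Rightarrow> nat \<Rightarrow> (nat ^ 'n) set" where
  "T_N N C1 C2 w K = {b \<in> H_N N C1 C2. \<exists>E. (\<forall>i<K. unitary2 (E i)) \<and>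
      (\<forall>g\<in>LS K. logical_action C2 w K (Ugate N b) g = tensor_op K E g)}"

definition Id_N :: "nat \<Rightarrow> (bit ^ 'n) set \<Rightarrow> (bit ^ 'n) set \<Rightarrow> (nat ^ 'n) set" where
  "Id_N N C1 C2 = {b \<in> H_N N C1 C2. \<forall>x\<in>CSS C1 C2. Ugate N b x = x}"

definition ones :: "nat ^ 'n" where
  "ones = (\<chi> i. 1)"

end

(*
  U(1,...,1) multiplies |x> by omega^wt(x). Every code state vanishes off C1 (a Z-stabilizer
  Z(v), v in the dual of C1 with v.y = 1, negates the amplitude at any y outside C1), and the
  coset states |c + C2>, c in C1, are code states. Testing U on them against the X-stabilizers
  shows that U preserves Q exactly when wt is constant mod N on every coset c + C2 inside C1,
  and that U fixes Q pointwise exactly when N divides every weight in C1. When U preserves Q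
  it acts diagonally in the logical basis, |v>_L -> omega^wt(E v) |v>_L with E v = sum v_i w_i.
  A diagonal operator with trivial phase at v = 0 is a tensor product iff its phases are
  multiplicative over the unit vectors, i.e. omega^wt(E v) = prod_{v_i = 1} omega^wt(w_i), and
  it equals U(1)^(tensor K) iff its phase is omega^(sum v_i).
*)

theory Submission
  imports Defs
begin

instance bit :: finite
proof
  have "(UNIV :: bit set) = {0, 1}"
    by (auto intro: bit.exhaust)
  then show "finite (UNIV :: bit set)"
    by (metis finite.emptyI finite_insert)
qed

lemma bitvec_add_self [simp]: "x + x = (0 :: bit ^ 'n)"
  by (simp add: vec_eq_iff)

lemma bitvec_double [simp]: "2 * x = (0 :: bit ^ 'n)"
  by (simp add: vec_eq_iff)

lemma bdot_zero [simp]: "bdot x 0 = 0" "bdot 0 x = 0"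
  unfolding bdot_def by simp_all

lemma sgn_bit_zero [simp]: "sgn_bit 0 = 1"
  unfolding sgn_bit_def by simp

lemma bdot_commute: "bdot x y = bdot y x"
  unfolding bdot_def by (rule sum.cong[OF refl]) (rule mult.commute)

lemma wt_zero [simp]: "wt 0 = 0"
  unfolding wt_def by simp

lemma finite_bvecs: "finite (bvecs K)"
proof -
  have "finite {v. \<forall>i. (i \<in> {..<K} \<longrightarrow> v i \<in> UNIV) \<and> (i \<notin> {..<K} \<longrightarrow> v i = (0 :: bit))}"
    by (rule finite_set_of_finite_funs) simp_all
  moreover have "bvecs K = {v. \<forall>i. (i \<in> {..<K} \<longrightarrow> v i \<in> UNIV) \<and> (i \<notin> {..<K} \<longrightarrow> v i = 0)}"
    unfolding bvecs_def by auto
  ultimately show ?thesis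
    by simp
qed

lemma bvecs_eq_iff: "v \<in> bvecs K \<Longrightarrow> v' \<in> bvecs K \<Longrightarrow> v = v' \<longleftrightarrow> (\<forall>i<K. v i = v' i)"
  unfolding bvecs_def by (auto simp: fun_eq_iff) (metis not_less)

lemma omega_power: "omega N ^ j = exp (2 * of_real pi * \<i> * of_nat j / of_nat N)"
  unfolding omega_def exp_of_nat_mult[symmetric] by (simp add: field_simps)

lemma omega_power_eq_iff: "N > 0 \<Longrightarrow> omega N ^ a = omega N ^ b \<longleftrightarrow> a mod N = b mod N"
  unfolding omega_power by (simp add: complex_root_unity_eq)

lemma norm_omega [simp]: "norm (omega N) = 1"
  unfolding omega_def by simp

lemma Ugate_ones: "Ugate N ones f = (\<lambda>x. omega N ^ wt x * f x)"
  unfolding Ugate_def ones_def wt_def by (simp add: prod.If_cases Int_def)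

lemma dual_code_separates:
  assumes C: "vec.subspace C" and y: "y \<notin> C"
  shows "\<exists>v\<in>dual_code C. bdot y v = 1"
proof -
  obtain B where B: "B \<subseteq> C" "vec.independent B" "C \<subseteq> vec.span B"
    by (rule vec.basis_exists)
  then have span_B: "vec.span B = C"
    using vec.span_subspace[OF _ _ C] by blast
  have "vec.independent (insert y B)"
    using B(2) y span_B by (auto simp: vec.independent_insert)
  from vec.linear_independent_extend[OF this, of "\<lambda>x. if x = y then (\<chi> i. 1) else 0"]
  obtain f where lf: "Vector_Spaces.linear (*s) (*s) f"
    and fv: "\<forall>x\<in>insert y B. f x = (if x = y then (\<chi> i. 1) else (0 :: bit ^ 'n))"
    by blast
  \<comment> \<open>f kills C and sends y to the all-ones vector, so every row of its matrix separates y from C.\<close>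
  fix k :: 'n
  define v where "v = (\<chi> j. matrix f $ k $ j)"
  have bdot_v: "bdot x v = f x $ k" for x
  proof -
    have "f x $ k = (matrix f *v x) $ k"
      using matrix_works[OF lf] by simp
    also have "\<dots> = (\<Sum>j\<in>UNIV. matrix f $ k $ j * x $ j)"
      by (simp add: matrix_vector_mult_def)
    also have "\<dots> = bdot x v"
      unfolding bdot_def v_def by (rule sum.cong[OF refl]) (simp add: mult.commute)
    finally show ?thesis
      by simp
  qed
  have "f x = 0" if "x \<in> B" for x
    using fv y B(1) that by auto
  then have "f x = 0" if "x \<in> C" for x
    using vec.linear_eq_0_on_span[OF lf] span_B that by blast
  then have "v \<in> dual_code C"
    unfolding dual_code_def using bdot_v by simp
  moreover have "bdot y v = 1"
    using bdot_v fv by simp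
  ultimately show ?thesis
    by blast
qed

lemma CSS_stabilized:
  "f \<in> CSS C1 C2 \<Longrightarrow> u \<in> C2 \<Longrightarrow> v \<in> dual_code C1 \<Longrightarrow>
    sgn_bit (bdot v (y + u)) * f (y + u) = f y"
  unfolding CSS_def XZ_def by (metis (mono_tags, lifting) mem_Collect_eq)

lemma CSS_vanishes_outside:
  assumes C1: "vec.subspace C1" and "0 \<in> C2" and f: "f \<in> CSS C1 C2" and y: "y \<notin> C1"
  shows "f y = 0"
proof -
  obtain v where v: "v \<in> dual_code C1" "bdot y v = 1"
    using dual_code_separates[OF C1 y] by blast
  have "sgn_bit (bdot v (y + 0)) * f (y + 0) = f y"
    using CSS_stabilized[OF f \<open>0 \<in> C2\<close> v(1)] .
  then have "- f y = f y"
    using v(2) bdot_commute[of y v] by (simp add: sgn_bit_def)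
  then show ?thesis
    by simp
qed

definition coset_state :: "(bit ^ 'n) set \<Rightarrow> bit ^ 'n \<Rightarrow> 'n state" where
  "coset_state C c = (\<lambda>y. if y + c \<in> C then 1 else 0)"

lemma coset_state_in_CSS:
  assumes C1: "vec.subspace C1" and C2: "vec.subspace C2" and "C2 \<subseteq> C1" and c: "c \<in> C1"
  shows "coset_state C2 c \<in> CSS C1 C2"
  unfolding CSS_def XZ_def
proof (intro CollectI ballI ext)
  fix u v y
  assume u: "u \<in> C2" and v: "v \<in> dual_code C1"
  have swap_u: "y + u + c = (y + c) + u" and cancel_u: "y + c = (y + u + c) + u"
    by (simp_all add: add_ac)
  have shift: "y + u + c \<in> C2 \<longleftrightarrow> y + c \<in> C2"
    using vec.subspace_add[OF C2 _ u, of "y + u + c", folded cancel_u]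
      vec.subspace_add[OF C2 _ u, of "y + c", folded swap_u] by blast
  have "bdot v (y + u) = 0" if "y + u + c \<in> C2"
  proof -
    have cancel_c: "y + u = (y + u + c) + c"
      by (simp add: add.assoc)
    have "y + u \<in> C1"
      using vec.subspace_add[OF C1 _ c, of "y + u + c", folded cancel_c] that \<open>C2 \<subseteq> C1\<close> by blast
    then have "bdot (y + u) v = 0"
      using v unfolding dual_code_def by blast
    then show ?thesis
      using bdot_commute[of v "y + u"] by simp
  qed
  then show "sgn_bit (bdot v (y + u)) * coset_state C2 c (y + u) = coset_state C2 c y"
    unfolding coset_state_def shift by simp
qed

lemma phase_mult_in_CSS:
  assumes C1: "vec.subspace C1" and "0 \<in> C2" and f: "f \<in> CSS C1 C2"
    and \<phi>: "\<forall>x\<in>C1. \<forall>u\<in>C2. \<phi> (x + u) = \<phi> x"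
  shows "(\<lambda>x. \<phi> x * f x) \<in> CSS C1 C2"
  unfolding CSS_def XZ_def
proof (intro CollectI ballI ext)
  fix u v y
  assume u: "u \<in> C2" and v: "v \<in> dual_code C1"
  have stab: "sgn_bit (bdot v (y + u)) * f (y + u) = f y"
    using CSS_stabilized[OF f u v] .
  show "sgn_bit (bdot v (y + u)) * (\<phi> (y + u) * f (y + u)) = \<phi> y * f y"
  proof (cases "y + u \<in> C1")
    case True
    then have "\<phi> (y + u + u) = \<phi> (y + u)"
      using \<phi> u by blast
    then have "\<phi> (y + u) = \<phi> y"
      by (simp add: add.assoc)
    then show ?thesis
      using stab by (simp add: algebra_simps)
  next
    case False
    then show ?thesis
      using stab CSS_vanishes_outside[OF C1 \<open>0 \<in> C2\<close> f] by simp
  qed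
qed

definition coset_weight_invariant :: "nat \<Rightarrow> (bit ^ 'n) set \<Rightarrow> (bit ^ 'n) set \<Rightarrow> bool" where
  "coset_weight_invariant N C1 C2 \<longleftrightarrow> (\<forall>x\<in>C1. \<forall>u\<in>C2. wt (x + u) mod N = wt x mod N)"

lemma coset_weight_invariant_iff_phase:
  "N > 0 \<Longrightarrow> coset_weight_invariant N C1 C2 \<longleftrightarrow>
    (\<forall>x\<in>C1. \<forall>u\<in>C2. omega N ^ wt (x + u) = omega N ^ wt x)"
  unfolding coset_weight_invariant_def by (simp add: omega_power_eq_iff)

lemma ones_in_H_N_iff:
  assumes C1: "vec.subspace C1" and C2: "vec.subspace C2" and "C2 \<subseteq> C1" and "N > 1"
  shows "ones \<in> H_N N C1 C2 \<longleftrightarrow> coset_weight_invariant N C1 C2"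
proof
  assume H: "ones \<in> H_N N C1 C2"
  show "coset_weight_invariant N C1 C2"
    unfolding coset_weight_invariant_def
  proof (intro ballI)
    fix x u
    assume x: "x \<in> C1" and u: "u \<in> C2"
    \<comment> \<open>The X-stabilizer X(u) compares the amplitudes of U |x + C2> at x + u and at x.\<close>
    have "Ugate N ones (coset_state C2 x) \<in> CSS C1 C2"
      using H coset_state_in_CSS[OF C1 C2 \<open>C2 \<subseteq> C1\<close> x] unfolding H_N_def by blast
    moreover have "0 \<in> dual_code C1"
      unfolding dual_code_def by simp
    ultimately have "Ugate N ones (coset_state C2 x) (x + u) = Ugate N ones (coset_state C2 x) x"
      using CSS_stabilized[OF _ u, of _ C1 0 x] by simp
    moreover have "x + u + x = u"
      by (simp add: add_ac)
    ultimately have "omega N ^ wt (x + u) = omega N ^ wt x"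
      using u vec.subspace_0[OF C2] by (simp add: Ugate_ones coset_state_def)
    then show "wt (x + u) mod N = wt x mod N"
      using omega_power_eq_iff \<open>N > 1\<close> by simp
  qed
next
  assume inv: "coset_weight_invariant N C1 C2"
  have "0 \<in> C2"
    using vec.subspace_0[OF C2] .
  have phase: "\<forall>x\<in>C1. \<forall>u\<in>C2. omega N ^ wt (x + u) = omega N ^ wt x"
    using inv coset_weight_invariant_iff_phase[of N C1 C2] \<open>N > 1\<close> by simp
  then have inverse_phase: "\<forall>x\<in>C1. \<forall>u\<in>C2. 1 / omega N ^ wt (x + u) = 1 / omega N ^ wt x"
    by simp
  have "Ugate N ones ` CSS C1 C2 \<subseteq> CSS C1 C2"
    using phase_mult_in_CSS[OF C1 \<open>0 \<in> C2\<close> _ phase] by (auto simp: Ugate_ones)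
  moreover have "f \<in> Ugate N ones ` CSS C1 C2" if f: "f \<in> CSS C1 C2" for f
    \<comment> \<open>The inverse phase is constant on the same cosets.\<close>
  proof
    show "f = Ugate N ones (\<lambda>x. 1 / omega N ^ wt x * f x)"
      by (simp add: Ugate_ones omega_def)
    show "(\<lambda>x. 1 / omega N ^ wt x * f x) \<in> CSS C1 C2"
      using phase_mult_in_CSS[OF C1 \<open>0 \<in> C2\<close> f inverse_phase] .
  qed
  ultimately show "ones \<in> H_N N C1 C2"
    using \<open>N > 1\<close> unfolding H_N_def ones_def by auto
qed

lemma ones_in_Id_N_iff:
  assumes C1: "vec.subspace C1" and C2: "vec.subspace C2" and "C2 \<subseteq> C1" and "N > 1"
  shows "ones \<in> Id_N N C1 C2 \<longleftrightarrow> divisible_code N C1"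
proof
  assume I: "ones \<in> Id_N N C1 C2"
  show "divisible_code N C1"
    unfolding divisible_code_def
  proof
    fix c
    assume c: "c \<in> C1"
    have "Ugate N ones (coset_state C2 c) c = coset_state C2 c c"
      using I coset_state_in_CSS[OF C1 C2 \<open>C2 \<subseteq> C1\<close> c] unfolding Id_N_def by simp
    then have "omega N ^ wt c = omega N ^ 0"
      using vec.subspace_0[OF C2] by (simp add: Ugate_ones coset_state_def)
    then show "N dvd wt c"
      using omega_power_eq_iff[of N "wt c" 0] \<open>N > 1\<close> by (simp add: dvd_eq_mod_eq_0)
  qed
next
  assume dvd: "divisible_code N C1"
  then have "coset_weight_invariant N C1 C2"
    using \<open>C2 \<subseteq> C1\<close> vec.subspace_add[OF C1]
    unfolding coset_weight_invariant_def divisible_code_def by (auto simp: dvd_eq_mod_eq_0)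
  then have H: "ones \<in> H_N N C1 C2"
    using ones_in_H_N_iff[OF assms] by blast
  have "Ugate N ones f = f" if "f \<in> CSS C1 C2" for f
    unfolding Ugate_ones
  proof (rule ext)
    fix x
    show "omega N ^ wt x * f x = f x"
    proof (cases "x \<in> C1")
      case True
      then have "wt x mod N = 0 mod N"
        using dvd unfolding divisible_code_def by (simp add: dvd_eq_mod_eq_0)
      then have "omega N ^ wt x = omega N ^ 0"
        using omega_power_eq_iff[of N "wt x" 0] \<open>N > 1\<close> by simp
      then show ?thesis
        by simp
    next
      case False
      then show ?thesis
        using CSS_vanishes_outside[OF C1 vec.subspace_0[OF C2] that] by simp
    qed
  qed
  then show "ones \<in> Id_N N C1 C2"
    using H unfolding Id_N_def by blast
qed

definition lket :: "(nat \<Rightarrow> bit) \<Rightarrow> (nat \<Rightarrow> bit) \<Rightarrow> complex" where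
  "lket v = (\<lambda>x. if x = v then 1 else 0)"

lemma lket_in_LS: "v \<in> bvecs K \<Longrightarrow> lket v \<in> LS K"
  unfolding lket_def LS_def by auto

lemma tensor_op_lket:
  assumes "v \<in> bvecs K" and "v' \<in> bvecs K"
  shows "tensor_op K E (lket v) v' = (\<Prod>i<K. E i (v' i) (v i))"
  unfolding tensor_op_def lket_def using assms finite_bvecs
  by (simp add: if_distrib[of "\<lambda>x. _ * x"] sum.delta' cong: if_cong)

lemma unitary2_U1: "unitary2 (U1 N a)"
proof -
  have "cnj (omega N ^ a) * omega N ^ a = 1"
    using complex_norm_square[of "omega N ^ a"] by (simp add: norm_power mult.commute)
  then show ?thesis
    unfolding unitary2_def U1_def by (auto intro: bit.exhaust)
qed

lemma prod_omega_power:
  "(\<Prod>i<K. if v i = 1 then omega N ^ a i else 1) = omega N ^ (\<Sum>i<K. of_bit (v i) * a i)"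
  unfolding power_sum
proof (rule prod.cong[OF refl])
  fix i
  show "(if v i = 1 then omega N ^ a i else 1) = omega N ^ (of_bit (v i) * a i)"
    by (cases "v i") simp_all
qed

lemma tensor_op_U1:
  assumes g: "g \<in> LS K"
  shows "tensor_op K (\<lambda>i. U1 N (a i)) g = (\<lambda>v. omega N ^ (\<Sum>i<K. of_bit (v i) * a i) * g v)"
proof
  fix v
  show "tensor_op K (\<lambda>i. U1 N (a i)) g v = omega N ^ (\<Sum>i<K. of_bit (v i) * a i) * g v"
  proof (cases "v \<in> bvecs K")
    case True
    have off_diagonal: "(\<Prod>i<K. U1 N (a i) (v i) (x i)) = 0" if x: "x \<in> bvecs K" "x \<noteq> v" for x
    proof -
      obtain j where "j < K" "v j \<noteq> x j"
        using bvecs_eq_iff[OF x(1) True] x(2) by auto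
      then have "j \<in> {..<K}" and "U1 N (a j) (v j) (x j) = 0"
        unfolding U1_def by simp_all
      then show ?thesis
        by (intro prod_zero) auto
    qed
    have "tensor_op K (\<lambda>i. U1 N (a i)) g v = (\<Sum>x\<in>bvecs K. (\<Prod>i<K. U1 N (a i) (v i) (x i)) * g x)"
      unfolding tensor_op_def using True by simp
    also have "\<dots> = (\<Sum>x\<in>bvecs K. if x = v then (\<Prod>i<K. U1 N (a i) (v i) (v i)) * g x else 0)"
      using off_diagonal by (intro sum.cong) auto
    also have "\<dots> = (\<Prod>i<K. U1 N (a i) (v i) (v i)) * g v"
      using True finite_bvecs by (simp add: sum.delta)
    finally show ?thesis
      by (simp add: U1_def prod_omega_power)
  next
    case False
    then show ?thesis
      using g unfolding tensor_op_def LS_def by simp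
  qed
qed

lemma in_T_N_if_tensor_U1:
  assumes "b \<in> H_N N C1 C2"
    and "\<forall>g\<in>LS K. logical_action C2 w K (Ugate N b) g = tensor_op K (\<lambda>i. U1 N (a i)) g"
  shows "b \<in> T_N N C1 C2 w K"
  unfolding T_N_def using assms unitary2_U1
  by (intro CollectI conjI exI[where x = "\<lambda>i. U1 N (a i)"]) simp_all

lemma prod_diagonal_factorizes:
  fixes F :: "nat \<Rightarrow> bit \<Rightarrow> complex"
  assumes F0: "(\<Prod>i<K. F i 0) = 1"
  shows "(\<Prod>i<K. F i (v i)) = (\<Prod>i<K. if v i = 1 then (\<Prod>j<K. F j (if j = i then 1 else 0)) else 1)"
proof -
  have factor: "F i (v i) = F i 0 * (if v i = 1 then (\<Prod>j<K. F j (if j = i then 1 else 0)) else 1)"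
    if i: "i < K" for i
  proof -
    define R where "R = (\<Prod>j\<in>{..<K} - {i}. F j 0)"
    have unit: "(\<Prod>j<K. F j (if j = i then 1 else 0)) = F i 1 * R"
      unfolding R_def using i by (simp add: prod.remove[of "{..<K}" i])
    have "F i 0 * R = 1"
      unfolding R_def using i F0 by (simp add: prod.remove[of "{..<K}" i])
    then have "F i 1 = F i 0 * (F i 1 * R)"
      by (metis mult.left_commute mult_1_right)
    then show ?thesis
      unfolding unit by (cases "v i") simp_all
  qed
  have "(\<Prod>i<K. F i (v i)) = (\<Prod>i<K. F i 0 * (if v i = 1 then (\<Prod>j<K. F j (if j = i then 1 else 0)) else 1))"
    using factor by (intro prod.cong) simp_all
  also have "\<dots> = (\<Prod>i<K. if v i = 1 then (\<Prod>j<K. F j (if j = i then 1 else 0)) else 1)"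
    unfolding prod.distrib F0 by simp
  finally show ?thesis .
qed

lemma encword_unit: "i < K \<Longrightarrow> encword w K (\<lambda>j. if j = i then 1 else 0) = w i"
  unfolding encword_def by (simp add: if_distrib[of "\<lambda>b. b *s _"] sum.delta' cong: if_cong)

locale CSS_encoding =
  fixes C1 C2 \<beta>1 \<beta>2 :: "(bit ^ 'n) set" and w :: "nat \<Rightarrow> bit ^ 'n" and K :: nat
  assumes C2_subset_C1: "C2 \<subseteq> C1"
    and basis_C1: "is_basis_of \<beta>1 C1" and basis_C2: "is_basis_of \<beta>2 C2"
    and basis_subset: "\<beta>2 \<subseteq> \<beta>1"
    and inj_w: "inj_on w {..<K}" and range_w: "w ` {..<K} = \<beta>1 - \<beta>2"
begin

lemma subspace_C1: "vec.subspace C1" and subspace_C2: "vec.subspace C2"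
  using basis_C1 basis_C2 unfolding is_basis_of_def by auto

lemma zero_in_C2: "0 \<in> C2"
  using vec.subspace_0[OF subspace_C2] .

lemma encword_in_C1: "encword w K v \<in> C1"
proof -
  have "w i \<in> C1" if "i < K" for i
    using range_w basis_C1 that unfolding is_basis_of_def by blast
  then show ?thesis
    unfolding encword_def using subspace_C1
    by (intro vec.subspace_sum) (auto intro: vec.subspace_scale)
qed

lemma encword_add: "encword w K (\<lambda>i. v i + v' i) = encword w K v + encword w K v'"
  unfolding encword_def by (simp only: vec.scale_left_distrib sum.distrib)

text \<open>The words w i complete a basis of C2 to one of C1, so no nontrivial combination lies in C2.\<close>
lemma encword_in_C2_imp:
  assumes in_C2: "encword w K v \<in> C2"
  shows "\<forall>i<K. v i = 0"
proof (rule ccontr)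
  assume "\<not> (\<forall>i<K. v i = 0)"
  then obtain j where j: "j < K" "v j = 1"
    by auto
  let ?rest = "\<Sum>i\<in>{..<K} - {j}. v i *s w i"
  have "encword w K v = w j + ?rest"
    unfolding encword_def using j by (simp add: sum.remove[of "{..<K}" j])
  then have w_j: "w j = encword w K v + ?rest"
    by (simp add: add.assoc)
  have w_j_new: "w j \<in> \<beta>1" "w j \<notin> \<beta>2"
    using range_w j by auto
  have "\<beta>2 \<subseteq> \<beta>1 - {w j}"
    using basis_subset w_j_new by auto
  then have "encword w K v \<in> vec.span (\<beta>1 - {w j})"
    using in_C2 basis_C2 vec.span_mono unfolding is_basis_of_def by blast
  moreover have "w i \<in> \<beta>1 - {w j}" if "i \<in> {..<K} - {j}" for i
    using that range_w inj_w j unfolding inj_on_def by auto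
  then have "?rest \<in> vec.span (\<beta>1 - {w j})"
    by (intro vec.span_sum vec.span_scale) (auto intro: vec.span_base)
  ultimately have "w j \<in> vec.span (\<beta>1 - {w j})"
    unfolding w_j by (rule vec.span_add)
  then have "vec.dependent \<beta>1"
    unfolding vec.dependent_def using w_j_new by blast
  then show False
    using basis_C1 unfolding is_basis_of_def by blast
qed

lemma encword_sum_in_C2_iff: "encword w K v0 + encword w K v \<in> C2 \<longleftrightarrow> (\<forall>i<K. v i = v0 i)"
proof
  assume "encword w K v0 + encword w K v \<in> C2"
  then have sum_zero: "\<forall>i<K. v0 i + v i = 0"
    unfolding encword_add[symmetric] by (rule encword_in_C2_imp)
  show "\<forall>i<K. v i = v0 i"
  proof (intro allI impI)
    fix i
    assume "i < K"
    then have "v0 i + v i = 0"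
      using sum_zero by blast
    then show "v i = v0 i"
      by (cases "v i"; cases "v0 i") simp_all
  qed
next
  assume "\<forall>i<K. v i = v0 i"
  then have "encword w K v = encword w K v0"
    unfolding encword_def by (intro sum.cong) auto
  then show "encword w K v0 + encword w K v \<in> C2"
    using zero_in_C2 by simp
qed

lemma C1_decomposition:
  assumes x: "x \<in> C1"
  shows "\<exists>u\<in>C2. \<exists>v\<in>bvecs K. x = u + encword w K v"
proof -
  have "\<beta>1 = \<beta>2 \<union> w ` {..<K}"
    using basis_subset range_w by auto
  then have "x \<in> vec.span (\<beta>2 \<union> w ` {..<K})"
    using x basis_C1 unfolding is_basis_of_def by simp
  then obtain u b where ub: "x = u + b" "u \<in> vec.span \<beta>2" "b \<in> vec.span (w ` {..<K})"
    unfolding vec.span_Un by blast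
  obtain c where "b = (\<Sum>s\<in>w ` {..<K}. c s *s s)"
    using ub(3) vec.span_finite[of "w ` {..<K}"] by auto
  also have "\<dots> = (\<Sum>i<K. c (w i) *s w i)"
    by (simp add: sum.reindex[OF inj_w])
  finally have b: "b = (\<Sum>i<K. c (w i) *s w i)" .
  define v where "v = (\<lambda>i. if i < K then c (w i) else 0)"
  have "v \<in> bvecs K"
    unfolding v_def bvecs_def by simp
  moreover have "encword w K v = b"
    unfolding b v_def encword_def by (rule sum.cong) auto
  ultimately show ?thesis
    using ub basis_C2 unfolding is_basis_of_def by blast
qed

lemma logket_at_encword:
  "logket C2 w K v (encword w K v0) =
    (if \<forall>i<K. v i = v0 i then 1 / complex_of_real (sqrt (real (card C2))) else 0)"
proof -
  have "encword w K v0 = u + encword w K v \<longleftrightarrow> u = encword w K v0 + encword w K v" for u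
    by (auto simp: add.assoc)
  then have "(\<Sum>u\<in>C2. ket (u + encword w K v) (encword w K v0)) =
      (\<Sum>u\<in>C2. if u = encword w K v0 + encword w K v then 1 else 0)"
    unfolding ket_def by (intro sum.cong) auto
  also have "\<dots> = (if encword w K v0 + encword w K v \<in> C2 then 1 else 0)"
    by (rule sum.delta) simp
  also have "\<dots> = (if \<forall>i<K. v i = v0 i then 1 else 0)"
    unfolding encword_sum_in_C2_iff ..
  finally have sum_eq: "(\<Sum>u\<in>C2. ket (u + encword w K v) (encword w K v0)) =
      (if \<forall>i<K. v i = v0 i then 1 else 0)" .
  show ?thesis
    unfolding logket_def sum_eq by auto
qed

lemma enc_at_encword:
  assumes "v0 \<in> bvecs K"
  shows "enc C2 w K g (encword w K v0) = g v0 / complex_of_real (sqrt (real (card C2)))"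
proof -
  have "enc C2 w K g (encword w K v0) =
      (\<Sum>v\<in>bvecs K. if v = v0 then g v / complex_of_real (sqrt (real (card C2))) else 0)"
    unfolding enc_def logket_at_encword using assms by (intro sum.cong) (auto simp: bvecs_eq_iff)
  then show ?thesis
    using assms finite_bvecs by (simp add: sum.delta)
qed

lemma inj_on_enc: "inj_on (enc C2 w K) (LS K)"
proof (rule inj_onI)
  fix g g'
  assume g: "g \<in> LS K" "g' \<in> LS K" and eq: "enc C2 w K g = enc C2 w K g'"
  have "C2 \<noteq> {}"
    using zero_in_C2 by blast
  show "g = g'"
  proof
    fix v
    show "g v = g' v"
    proof (cases "v \<in> bvecs K")
      case True
      then show ?thesis
        using fun_cong[OF eq, of "encword w K v"] \<open>C2 \<noteq> {}\<close> by (simp add: enc_at_encword)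
    next
      case False
      then show ?thesis
        using g unfolding LS_def by simp
    qed
  qed
qed

lemma logket_phase:
  assumes \<phi>: "\<forall>x\<in>C1. \<forall>u\<in>C2. \<phi> (x + u) = \<phi> x"
  shows "\<phi> y * logket C2 w K v y = \<phi> (encword w K v) * logket C2 w K v y"
proof -
  have on_support: "\<phi> y * ket (u + encword w K v) y = \<phi> (encword w K v) * ket (u + encword w K v) y"
    if "u \<in> C2" for u
  proof -
    have "\<phi> (u + encword w K v) = \<phi> (encword w K v)"
      using \<phi> encword_in_C1 that by (metis add.commute)
    then show ?thesis
      by (simp add: ket_def)
  qed
  have "\<phi> y * (\<Sum>u\<in>C2. ket (u + encword w K v) y) =
      \<phi> (encword w K v) * (\<Sum>u\<in>C2. ket (u + encword w K v) y)"
    unfolding sum_distrib_left using on_support by (rule sum.cong[OF refl])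
  then show ?thesis
    unfolding logket_def
    by (simp only: mult.left_commute[of "\<phi> y"] mult.left_commute[of "\<phi> (encword w K v)"])
qed

lemma logical_action_phase:
  assumes \<phi>: "\<forall>x\<in>C1. \<forall>u\<in>C2. \<phi> (x + u) = \<phi> x" and g: "g \<in> LS K"
  shows "logical_action C2 w K (\<lambda>f x. \<phi> x * f x) g = (\<lambda>v. \<phi> (encword w K v) * g v)"
proof -
  have "\<phi> x * enc C2 w K g x = enc C2 w K (\<lambda>v. \<phi> (encword w K v) * g v) x" for x
  proof -
    have "\<phi> x * enc C2 w K g x = (\<Sum>v\<in>bvecs K. g v * (\<phi> x * logket C2 w K v x))"
      unfolding enc_def by (simp add: sum_distrib_left mult.left_commute)
    also have "\<dots> = (\<Sum>v\<in>bvecs K. g v * (\<phi> (encword w K v) * logket C2 w K v x))"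
      by (simp only: logket_phase[OF \<phi>])
    also have "\<dots> = enc C2 w K (\<lambda>v. \<phi> (encword w K v) * g v) x"
      unfolding enc_def by (simp add: mult.assoc mult.left_commute)
    finally show ?thesis .
  qed
  moreover have "(\<lambda>v. \<phi> (encword w K v) * g v) \<in> LS K"
    using g unfolding LS_def by simp
  ultimately show ?thesis
    unfolding logical_action_def using the_inv_into_f_f[OF inj_on_enc] by presburger
qed

lemma weight_condition_iff:
  "(\<forall>u\<in>C2. \<forall>v\<in>bvecs K. wt (u + encword w K v) mod N = h v mod N) \<longleftrightarrow>
    coset_weight_invariant N C1 C2 \<and> (\<forall>v\<in>bvecs K. wt (encword w K v) mod N = h v mod N)"
proof
  assume cond: "\<forall>u\<in>C2. \<forall>v\<in>bvecs K. wt (u + encword w K v) mod N = h v mod N"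
  have "wt (x + u) mod N = wt x mod N" if x: "x \<in> C1" and u: "u \<in> C2" for x u
  proof -
    obtain u' v where u': "u' \<in> C2" and v: "v \<in> bvecs K" and x_eq: "x = u' + encword w K v"
      using C1_decomposition[OF x] by blast
    have sum_eq: "x + u = (u' + u) + encword w K v"
      unfolding x_eq by (simp add: add_ac)
    have "u' + u \<in> C2"
      using vec.subspace_add[OF subspace_C2 u' u] .
    then have "wt (x + u) mod N = h v mod N"
      unfolding sum_eq using cond v by blast
    moreover have "wt x mod N = h v mod N"
      using cond u' v x_eq by blast
    ultimately show ?thesis
      by simp
  qed
  moreover have "wt (encword w K v) mod N = h v mod N" if "v \<in> bvecs K" for v
    using cond zero_in_C2 that by fastforce
  ultimately show "coset_weight_invariant N C1 C2 \<and> (\<forall>v\<in>bvecs K. wt (encword w K v) mod N = h v mod N)"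
    unfolding coset_weight_invariant_def by blast
next
  assume "coset_weight_invariant N C1 C2 \<and> (\<forall>v\<in>bvecs K. wt (encword w K v) mod N = h v mod N)"
  then show "\<forall>u\<in>C2. \<forall>v\<in>bvecs K. wt (u + encword w K v) mod N = h v mod N"
    using encword_in_C1 unfolding coset_weight_invariant_def by (metis add.commute)
qed

lemma logical_action_Ugate_ones:
  assumes "N > 0" and inv: "coset_weight_invariant N C1 C2" and g: "g \<in> LS K"
  shows "logical_action C2 w K (Ugate N ones) g = (\<lambda>v. omega N ^ wt (encword w K v) * g v)"
proof -
  have Ugate_eq: "Ugate N ones = (\<lambda>f x. omega N ^ wt x * f x)"
    by (rule ext) (rule Ugate_ones)
  have phase: "\<forall>x\<in>C1. \<forall>u\<in>C2. omega N ^ wt (x + u) = omega N ^ wt x"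
    using inv coset_weight_invariant_iff_phase[OF \<open>N > 0\<close>] by blast
  show ?thesis
    unfolding Ugate_eq by (rule logical_action_phase[where \<phi> = "\<lambda>x. omega N ^ wt x", OF phase g])
qed

lemma logical_action_Ugate_ones_lket:
  assumes "N > 0" and "coset_weight_invariant N C1 C2" and v: "v \<in> bvecs K"
  shows "logical_action C2 w K (Ugate N ones) (lket v) v = omega N ^ wt (encword w K v)"
  using logical_action_Ugate_ones[OF assms(1,2) lket_in_LS[OF v]] by (simp add: lket_def)

lemma logical_action_Ugate_ones_eq_U1_iff:
  assumes "N > 0" and inv: "coset_weight_invariant N C1 C2"
  shows "(\<forall>g\<in>LS K. logical_action C2 w K (Ugate N ones) g = tensor_op K (\<lambda>i. U1 N (a i)) g) \<longleftrightarrow>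
    (\<forall>v\<in>bvecs K. wt (encword w K v) mod N = (\<Sum>i<K. of_bit (v i) * a i) mod N)"
proof
  assume act: "\<forall>g\<in>LS K. logical_action C2 w K (Ugate N ones) g = tensor_op K (\<lambda>i. U1 N (a i)) g"
  show "\<forall>v\<in>bvecs K. wt (encword w K v) mod N = (\<Sum>i<K. of_bit (v i) * a i) mod N"
  proof
    fix v
    assume v: "v \<in> bvecs K"
    have "omega N ^ wt (encword w K v) = logical_action C2 w K (Ugate N ones) (lket v) v"
      using logical_action_Ugate_ones_lket[OF assms v] by simp
    also have "\<dots> = tensor_op K (\<lambda>i. U1 N (a i)) (lket v) v"
      using act lket_in_LS[OF v] by simp
    also have "\<dots> = omega N ^ (\<Sum>i<K. of_bit (v i) * a i)"
      unfolding tensor_op_U1[OF lket_in_LS[OF v]] by (simp add: lket_def)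
    finally show "wt (encword w K v) mod N = (\<Sum>i<K. of_bit (v i) * a i) mod N"
      using omega_power_eq_iff[OF \<open>N > 0\<close>] by simp
  qed
next
  assume weights: "\<forall>v\<in>bvecs K. wt (encword w K v) mod N = (\<Sum>i<K. of_bit (v i) * a i) mod N"
  show "\<forall>g\<in>LS K. logical_action C2 w K (Ugate N ones) g = tensor_op K (\<lambda>i. U1 N (a i)) g"
  proof
    fix g
    assume g: "g \<in> LS K"
    have pointwise: "omega N ^ wt (encword w K v) * g v = omega N ^ (\<Sum>i<K. of_bit (v i) * a i) * g v"
      for v
    proof (cases "v \<in> bvecs K")
      case True
      then show ?thesis
        using weights omega_power_eq_iff[OF \<open>N > 0\<close>] by simp
    next
      case False
      then show ?thesis
        using g unfolding LS_def by simp
    qed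
    then show "logical_action C2 w K (Ugate N ones) g = tensor_op K (\<lambda>i. U1 N (a i)) g"
      unfolding logical_action_Ugate_ones[OF assms g] tensor_op_U1[OF g] by (intro ext pointwise)
  qed
qed

text \<open>If the diagonal logical action is any tensor product, its phases are multiplicative,
  hence determined by the phases omega ^ wt (w i) at the unit vectors.\<close>
lemma logical_action_Ugate_ones_tensor_weights:
  assumes "N > 0" and inv: "coset_weight_invariant N C1 C2"
    and act: "\<forall>g\<in>LS K. logical_action C2 w K (Ugate N ones) g = tensor_op K E g"
  shows "\<forall>v\<in>bvecs K. wt (encword w K v) mod N = (\<Sum>i<K. of_bit (v i) * wt (w i)) mod N"
proof
  define F where "F i b = E i b b" for i b
  have diagonal: "(\<Prod>i<K. F i (v i)) = omega N ^ wt (encword w K v)" if v: "v \<in> bvecs K" for v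
  proof -
    have "(\<Prod>i<K. F i (v i)) = tensor_op K E (lket v) v"
      unfolding F_def tensor_op_lket[OF v v] ..
    also have "\<dots> = omega N ^ wt (encword w K v)"
      using act lket_in_LS[OF v] logical_action_Ugate_ones_lket[OF \<open>N > 0\<close> inv v] by simp
    finally show ?thesis .
  qed
  have "(\<lambda>_. 0) \<in> bvecs K"
    unfolding bvecs_def by simp
  moreover have "encword w K (\<lambda>_. 0) = 0"
    unfolding encword_def by simp
  ultimately have F0: "(\<Prod>i<K. F i 0) = 1"
    using diagonal[of "\<lambda>_. 0"] by simp
  have unit: "(\<Prod>j<K. F j (if j = i then 1 else 0)) = omega N ^ wt (w i)" if "i < K" for i
  proof -
    have "(\<lambda>j. if j = i then 1 else 0) \<in> bvecs K"
      using that unfolding bvecs_def by simp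
    from diagonal[OF this] show ?thesis
      unfolding encword_unit[OF that] .
  qed
  fix v
  assume v: "v \<in> bvecs K"
  have "omega N ^ wt (encword w K v) = (\<Prod>i<K. F i (v i))"
    using diagonal[OF v] ..
  also have "\<dots> = (\<Prod>i<K. if v i = 1 then (\<Prod>j<K. F j (if j = i then 1 else 0)) else 1)"
    by (rule prod_diagonal_factorizes[where F = F, OF F0])
  also have "\<dots> = (\<Prod>i<K. if v i = 1 then omega N ^ wt (w i) else 1)"
  proof (rule prod.cong[OF refl])
    fix i
    assume "i \<in> {..<K}"
    then show "(if v i = 1 then \<Prod>j<K. F j (if j = i then 1 else 0) else 1) =
        (if v i = 1 then omega N ^ wt (w i) else 1)"
      using unit by simp
  qed
  also have "\<dots> = omega N ^ (\<Sum>i<K. of_bit (v i) * wt (w i))"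
    by (rule prod_omega_power)
  finally show "wt (encword w K v) mod N = (\<Sum>i<K. of_bit (v i) * wt (w i)) mod N"
    using omega_power_eq_iff[OF \<open>N > 0\<close>] by simp
qed

lemma ones_in_H_N_iff_coset_weight_invariant:
  "N > 1 \<Longrightarrow> ones \<in> H_N N C1 C2 \<longleftrightarrow> coset_weight_invariant N C1 C2"
  using ones_in_H_N_iff[OF subspace_C1 subspace_C2 C2_subset_C1] .

lemma ones_in_T_N_iff:
  assumes "N > 1"
  shows "ones \<in> T_N N C1 C2 w K \<longleftrightarrow>
    (\<forall>u\<in>C2. \<forall>v\<in>bvecs K. wt (u + encword w K v) mod N = (\<Sum>i<K. of_bit (v i) * wt (w i)) mod N)"
  (is "_ \<longleftrightarrow> ?weights")
proof -
  have "N > 0"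
    using \<open>N > 1\<close> by simp
  note weights_iff = weight_condition_iff[of N "\<lambda>v. \<Sum>i<K. of_bit (v i) * wt (w i)"]
  show ?thesis
  proof
    assume T: "ones \<in> T_N N C1 C2 w K"
    then have inv: "coset_weight_invariant N C1 C2"
      using ones_in_H_N_iff_coset_weight_invariant[OF \<open>N > 1\<close>] unfolding T_N_def by blast
    obtain E where act: "\<forall>g\<in>LS K. logical_action C2 w K (Ugate N ones) g = tensor_op K E g"
      using T unfolding T_N_def by blast
    show ?weights
      using logical_action_Ugate_ones_tensor_weights[OF \<open>N > 0\<close> inv act] inv weights_iff by blast
  next
    assume ?weights
    then have inv: "coset_weight_invariant N C1 C2"
      and "\<forall>v\<in>bvecs K. wt (encword w K v) mod N = (\<Sum>i<K. of_bit (v i) * wt (w i)) mod N"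
      using weights_iff by blast+
    then have "\<forall>g\<in>LS K. logical_action C2 w K (Ugate N ones) g = tensor_op K (\<lambda>i. U1 N (wt (w i))) g"
      using logical_action_Ugate_ones_eq_U1_iff[OF \<open>N > 0\<close> inv, of "\<lambda>i. wt (w i)"] by blast
    moreover have "ones \<in> H_N N C1 C2"
      using ones_in_H_N_iff_coset_weight_invariant[OF \<open>N > 1\<close>] inv by blast
    ultimately show "ones \<in> T_N N C1 C2 w K"
      by (rule in_T_N_if_tensor_U1[rotated])
  qed
qed

lemma ones_in_T_N_acting_as_U1_iff:
  assumes "N > 1"
  shows "(ones \<in> T_N N C1 C2 w K \<and>
      (\<forall>g\<in>LS K. logical_action C2 w K (Ugate N ones) g = tensor_op K (\<lambda>i. U1 N 1) g)) \<longleftrightarrow>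
    (\<forall>u\<in>C2. \<forall>v\<in>bvecs K. wt (u + encword w K v) mod N = (\<Sum>i<K. of_bit (v i) :: nat) mod N)"
proof -
  have "N > 0"
    using \<open>N > 1\<close> by simp
  let ?acts_as_U1 = "\<forall>g\<in>LS K. logical_action C2 w K (Ugate N ones) g = tensor_op K (\<lambda>i. U1 N 1) g"
  have "(ones \<in> T_N N C1 C2 w K \<and> ?acts_as_U1) \<longleftrightarrow> ones \<in> H_N N C1 C2 \<and> ?acts_as_U1"
    using in_T_N_if_tensor_U1[of ones N C1 C2 K w "\<lambda>_. 1"] unfolding T_N_def by blast
  also have "\<dots> \<longleftrightarrow> coset_weight_invariant N C1 C2 \<and>
      (\<forall>v\<in>bvecs K. wt (encword w K v) mod N = (\<Sum>i<K. of_bit (v i) * 1) mod N)"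
    using ones_in_H_N_iff_coset_weight_invariant[OF \<open>N > 1\<close>]
      logical_action_Ugate_ones_eq_U1_iff[OF \<open>N > 0\<close>, of "\<lambda>_. 1"] by blast
  also have "\<dots> \<longleftrightarrow>
      (\<forall>u\<in>C2. \<forall>v\<in>bvecs K. wt (u + encword w K v) mod N = (\<Sum>i<K. of_bit (v i) :: nat) mod N)"
    using weight_condition_iff[of N "\<lambda>v. \<Sum>i<K. of_bit (v i)"] by simp
  finally show ?thesis .
qed

end

theorem corollary3p17:
  fixes C1 C2 \<beta>1 \<beta>2 :: "(bit ^ 'n) set"
    and w :: "nat \<Rightarrow> bit ^ 'n" and K :: nat and N l :: nat
  assumes "C2 \<subseteq> C1"
    and "is_basis_of \<beta>1 C1" and "is_basis_of \<beta>2 C2" and "\<beta>2 \<subseteq> \<beta>1"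
    and "inj_on w {..<K}" and "w ` {..<K} = \<beta>1 - \<beta>2"
    and "l > 0" and "N = 2 ^ l"
  shows "(ones \<in> T_N N C1 C2 w K \<longleftrightarrow>
           (\<forall>u\<in>C2. \<forall>v\<in>bvecs K.
              wt (u + (\<Sum>i<K. v i *s w i)) mod N = (\<Sum>i<K. of_bit (v i) * wt (w i)) mod N))
    \<and> ((ones \<in> T_N N C1 C2 w K \<and>
          (\<forall>g\<in>LS K. logical_action C2 w K (Ugate N ones) g = tensor_op K (\<lambda>i. U1 N 1) g)) \<longleftrightarrow>
           (\<forall>u\<in>C2. \<forall>v\<in>bvecs K.
              wt (u + (\<Sum>i<K. v i *s w i)) mod N = (\<Sum>i<K. of_bit (v i) :: nat) mod N))
    \<and> (ones \<in> Id_N N C1 C2 \<longleftrightarrow> divisible_code N C1)"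
proof -
  interpret CSS_encoding C1 C2 \<beta>1 \<beta>2 w K
    using assms(1-6) by unfold_locales
  have "N > 1"
    using assms(7,8) one_less_power[of "2 :: nat" l] by simp
  show ?thesis
    using ones_in_T_N_iff[OF \<open>N > 1\<close>] ones_in_T_N_acting_as_U1_iff[OF \<open>N > 1\<close>]
      ones_in_Id_N_iff[OF subspace_C1 subspace_C2 C2_subset_C1 \<open>N > 1\<close>]
    unfolding encword_def by blast
qed

end
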